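(* Let $(X,d)$ be a metric space, $a\in X$, and let $\tilde x$ be a sequence of points of $X$ that is $d$-statistically convergent to $a$. Suppose $\tilde x'=(x_{n(k)})$ is a subsequence of $\tilde x$ for which there exist a sequence $\tilde y$ of points of $X$ and a subsequence $\tilde y'$ of $\tilde y$ such that $\tilde y$ and $\tilde x$ are statistically equivalent, $K_{\tilde x'}=K_{\tilde y'}$, and $\tilde y'$ is not $d$-statistically convergent. Then $\liminf_{n\to\infty}\frac{|K_{\tilde x'}(n)|}{n}=0$.
   Context: For a subsequence $\tilde z'=(z_{n(k)})$ of a sequence $(z_n)$ (with $(n(k))$ infinite and strictly increasing), $K_{\tilde z'}=\{n(k):k\in\mathbb N\}$ and $K_{\tilde z'}(n)=\{m\in K_{\tilde z'}:m\le n\}$. A sequence $(z_k)$ is $d$-statistically convergent to $a$ if $\lim_{n\to\infty}\frac1n|\{k\le n: d(z_k,a)\ge\epsilon\}|=0$ for all $\epsilon>0$, and $d$-statistically convergent if this holds for some $a\in X$; subsequences are regarded as sequences indexed by $k$. A set $M\subseteq\mathbb N$ is statistical dense if $\lim_{n\to\infty}|\{m\in M:m\le n\}|/n=1$; sequences $(x_n),(y_n)$ are statistically equivalent if $x_n=y_n$ for all $n$ in some statistical dense $M$. *)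

theory Defs
  imports "HOL-Analysis.Analysis"
begin

text \<open>Sequences are indexed by nat starting at 0; the n-th initial segment is {k. k < n}.\<close>

definition d_stat_conv_to :: "(nat \<Rightarrow> 'a::metric_space) \<Rightarrow> 'a \<Rightarrow> bool" where
  "d_stat_conv_to z a \<longleftrightarrow>
     (\<forall>\<epsilon>>0. (\<lambda>n. real (card {k. k < n \<and> dist (z k) a \<ge> \<epsilon>}) / real n) \<longlonglongrightarrow> 0)"

definition d_stat_conv :: "(nat \<Rightarrow> 'a::metric_space) \<Rightarrow> bool" where
  "d_stat_conv z \<longleftrightarrow> (\<exists>a. d_stat_conv_to z a)"

definition stat_dense :: "nat set \<Rightarrow> bool" where
  "stat_dense M \<longleftrightarrow> (\<lambda>n. real (card {m\<in>M. m < n}) / real n) \<longlonglongrightarrow> 1"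

definition stat_equiv :: "(nat \<Rightarrow> 'a) \<Rightarrow> (nat \<Rightarrow> 'a) \<Rightarrow> bool" where
  "stat_equiv x y \<longleftrightarrow> (\<exists>M. stat_dense M \<and> (\<forall>n\<in>M. x n = y n))"

text \<open>Index set of the subsequence (z (r k))_k, i.e. K = range r, and its counting set K(n).\<close>
definition subseq_index :: "(nat \<Rightarrow> nat) \<Rightarrow> nat set" where
  "subseq_index r = range r"

definition subseq_index_upto :: "(nat \<Rightarrow> nat) \<Rightarrow> nat \<Rightarrow> nat set" where
  "subseq_index_upto r n = {m \<in> subseq_index r. m < n}"

end

theory Submission
  imports Defs
begin

text \<open>Removing the statistically dense set on which the two sequences agree and the set where
  the original sequence is far from its limit leaves only indices of zero density. A subsequence
  whose index set has positive lower density \<open>\<delta>\<close> reaches index \<open>s m\<close> within at most \<open>m / \<delta>\<close>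
  terms, so pulling a zero-density set back along it still gives zero density. Hence the
  subsequence of the equivalent sequence would converge statistically, contrary to assumption.\<close>

definition zero_density :: "nat set \<Rightarrow> bool" where
  "zero_density A \<longleftrightarrow> (\<lambda>n. real (card {k\<in>A. k < n}) / real n) \<longlonglongrightarrow> 0"

lemma d_stat_conv_to_iff_zero_density:
  "d_stat_conv_to z a \<longleftrightarrow> (\<forall>\<epsilon>>0. zero_density {k. dist (z k) a \<ge> \<epsilon>})"
  by (simp add: d_stat_conv_to_def zero_density_def conj_commute)

lemma zero_density_subset:
  assumes "zero_density B" and "A \<subseteq> B"
  shows "zero_density A"
  unfolding zero_density_def
proof (rule tendsto_sandwich[OF _ _ tendsto_const assms(1)[unfolded zero_density_def]])
  show "\<forall>\<^sub>F n in sequentially. 0 \<le> real (card {k\<in>A. k < n}) / real n"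
    by simp
  have "card {k\<in>A. k < n} \<le> card {k\<in>B. k < n}" for n
    using assms(2) by (intro card_mono) auto
  then show "\<forall>\<^sub>F n in sequentially. real (card {k\<in>A. k < n}) / real n \<le> real (card {k\<in>B. k < n}) / real n"
    by (intro always_eventually allI divide_right_mono) auto
qed

lemma zero_density_Un:
  assumes "zero_density A" and "zero_density B"
  shows "zero_density (A \<union> B)"
proof -
  let ?d = "\<lambda>C n. real (card {k\<in>C. k < n}) / real n"
  have sum: "(\<lambda>n. ?d A n + ?d B n) \<longlonglongrightarrow> 0"
    using tendsto_add[OF assms[unfolded zero_density_def]] by simp
  show ?thesis
    unfolding zero_density_def
  proof (rule tendsto_sandwich[OF _ _ tendsto_const sum])
    have "{k\<in>A \<union> B. k < n} = {k\<in>A. k < n} \<union> {k\<in>B. k < n}" for n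
      by auto
    then have "card {k\<in>A \<union> B. k < n} \<le> card {k\<in>A. k < n} + card {k\<in>B. k < n}" for n
      by (metis card_Un_le)
    then have "real (card {k\<in>A \<union> B. k < n}) \<le> real (card {k\<in>A. k < n}) + real (card {k\<in>B. k < n})" for n
      by (metis of_nat_add of_nat_mono)
    then have "?d (A \<union> B) n \<le> ?d A n + ?d B n" for n
      unfolding add_divide_distrib[symmetric] by (rule divide_right_mono) simp
    then show "\<forall>\<^sub>F n in sequentially. ?d (A \<union> B) n \<le> ?d A n + ?d B n"
      by simp
  qed simp
qed

lemma zero_density_Compl_stat_dense:
  assumes "stat_dense M"
  shows "zero_density (- M)"
proof -
  have "(\<lambda>n. 1 - real (card {m\<in>M. m < n}) / real n) \<longlonglongrightarrow> 1 - 1"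
    using assms unfolding stat_dense_def by (intro tendsto_diff) auto
  moreover have "\<forall>\<^sub>F n in sequentially.
      1 - real (card {m\<in>M. m < n}) / real n = real (card {k\<in>-M. k < n}) / real n"
  proof (rule eventually_sequentiallyI[of 1])
    fix n :: nat assume "1 \<le> n"
    have "{m\<in>M. m < n} \<union> {k\<in>-M. k < n} = {..<n}" "{m\<in>M. m < n} \<inter> {k\<in>-M. k < n} = {}"
      by auto
    then have "card {m\<in>M. m < n} + card {k\<in>-M. k < n} = n"
      by (metis card_Un_disjoint card_lessThan finite_Un finite_lessThan)
    then show "1 - real (card {m\<in>M. m < n}) / real n = real (card {k\<in>-M. k < n}) / real n"
      using \<open>1 \<le> n\<close> by (simp add: field_simps flip: of_nat_add)
  qed
  ultimately show ?thesis
    unfolding zero_density_def by (simp add: Lim_transform_eventually)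
qed

lemma card_range_less_strict_mono:
  assumes "strict_mono s"
  shows "card {j \<in> range s. j < s m} = m"
proof -
  have "{j \<in> range s. j < s m} = s ` {..<m}"
    using assms by (auto simp: strict_mono_less)
  moreover have "inj s"
    using assms strict_mono_imp_inj_on by blast
  ultimately show ?thesis
    by (simp add: card_image inj_on_subset)
qed

lemma eventually_index_bound_pos_lower_density:
  assumes "strict_mono s"
    and "liminf (\<lambda>n. ereal (real (card {j \<in> range s. j < n}) / real n)) \<noteq> 0"
  obtains \<delta> where "\<delta> > 0" and "\<forall>\<^sub>F m in sequentially. \<delta> * real (s m) < real m"
proof -
  let ?f = "\<lambda>n. ereal (real (card {j \<in> range s. j < n}) / real n)"
  have "0 \<le> liminf ?f"
    by (rule Liminf_bounded) (auto intro: always_eventually)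
  with assms(2) have "0 < liminf ?f"
    by simp
  then obtain \<delta> where "0 < ereal \<delta>" and "ereal \<delta> < liminf ?f"
    using ereal_dense2 by blast
  from \<open>ereal \<delta> < liminf ?f\<close> have "\<forall>\<^sub>F n in sequentially. ereal \<delta> < ?f n"
    by (rule less_LiminfD)
  then have "\<forall>\<^sub>F m in sequentially. ereal \<delta> < ?f (s m)"
    using filterlim_iff[THEN iffD1, OF filterlim_subseq[OF assms(1)]] by blast
  then have "\<forall>\<^sub>F m in sequentially. \<delta> * real (s m) < real m"
  proof (rule eventually_mono)
    fix m assume "ereal \<delta> < ?f (s m)"
    with card_range_less_strict_mono[OF assms(1)] have "\<delta> < real m / real (s m)"
      by simp
    moreover from this \<open>0 < ereal \<delta>\<close> have "s m > 0"
      by (cases "s m") auto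
    ultimately show "\<delta> * real (s m) < real m"
      by (simp add: field_simps)
  qed
  with \<open>0 < ereal \<delta>\<close> show ?thesis
    using that by simp
qed

lemma zero_density_vimage_strict_mono:
  assumes "zero_density A" and "strict_mono s"
    and "\<delta> > 0" and bound: "\<forall>\<^sub>F m in sequentially. \<delta> * real (s m) < real m"
  shows "zero_density (s -` A)"
proof -
  let ?d = "\<lambda>C n. real (card {k\<in>C. k < n}) / real n"
  have "(\<lambda>m. ?d A (s m) / \<delta>) \<longlonglongrightarrow> 0 / \<delta>"
    using assms(1) filterlim_subseq[OF assms(2)] \<open>\<delta> > 0\<close>
    by (intro tendsto_divide tendsto_const) (auto simp: zero_density_def intro: filterlim_compose)
  then have pulled: "(\<lambda>m. ?d A (s m) / \<delta>) \<longlonglongrightarrow> 0"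
    by simp
  show ?thesis
    unfolding zero_density_def
  proof (rule tendsto_sandwich[OF _ _ tendsto_const pulled])
    show "\<forall>\<^sub>F m in sequentially. ?d (s -` A) m \<le> ?d A (s m) / \<delta>"
      using bound
    proof (rule eventually_mono)
      fix m assume m: "\<delta> * real (s m) < real m"
      have "card {k\<in>s -` A. k < m} = card (s ` {k\<in>s -` A. k < m})"
        using strict_mono_imp_inj_on[OF assms(2)] by (simp add: card_image inj_on_subset)
      also have "\<dots> \<le> card {j\<in>A. j < s m}"
        using assms(2) by (intro card_mono) (auto simp: strict_mono_less)
      finally have "real (card {k\<in>s -` A. k < m}) * (\<delta> * real (s m))
          \<le> real (card {j\<in>A. j < s m}) * real m"
        using m \<open>\<delta> > 0\<close> by (intro mult_mono) auto
      moreover have "m > 0"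
        using m \<open>\<delta> > 0\<close> mult_nonneg_nonneg[of \<delta> "real (s m)"] by linarith
      moreover have "s m > 0"
        using \<open>m > 0\<close> seq_suble[OF assms(2), of m] by simp
      ultimately show "?d (s -` A) m \<le> ?d A (s m) / \<delta>"
        using \<open>\<delta> > 0\<close> by (simp add: field_simps)
    qed
  qed simp
qed

theorem theorem8:
  fixes x y :: "nat \<Rightarrow> 'a::metric_space" and a :: 'a and r s :: "nat \<Rightarrow> nat"
  assumes "d_stat_conv_to x a"
    and "strict_mono r"
    and "strict_mono s"
    and "stat_equiv y x"
    and "subseq_index r = subseq_index s"
    and "\<not> d_stat_conv (y \<circ> s)"
  shows "liminf (\<lambda>n. ereal (real (card (subseq_index_upto r n)) / real n)) = 0"
proof (rule ccontr)
  assume "liminf (\<lambda>n. ereal (real (card (subseq_index_upto r n)) / real n)) \<noteq> 0"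
  with assms(3,5) obtain \<delta> where "\<delta> > 0" and bound: "\<forall>\<^sub>F m in sequentially. \<delta> * real (s m) < real m"
    by (auto simp: subseq_index_upto_def subseq_index_def
        elim: eventually_index_bound_pos_lower_density)
  obtain M where "stat_dense M" and agree: "\<forall>n\<in>M. y n = x n"
    using assms(4) unfolding stat_equiv_def by blast
  have "zero_density {k. dist ((y \<circ> s) k) a \<ge> \<epsilon>}" if "\<epsilon> > 0" for \<epsilon>
  proof -
    have "zero_density (- M \<union> {k. dist (x k) a \<ge> \<epsilon>})"
      using zero_density_Compl_stat_dense[OF \<open>stat_dense M\<close>] assms(1) that
      by (simp add: zero_density_Un d_stat_conv_to_iff_zero_density)
    then have "zero_density (s -` (- M \<union> {k. dist (x k) a \<ge> \<epsilon>}))"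
      using assms(3) \<open>\<delta> > 0\<close> bound by (rule zero_density_vimage_strict_mono)
    then show ?thesis
      by (rule zero_density_subset) (use agree in auto)
  qed
  then show False
    using assms(6) by (auto simp: d_stat_conv_def d_stat_conv_to_iff_zero_density)
qed

end
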